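(* Let $X$ be a nondegenerate dendrite and $h:X\to X$ a homeomorphism. If $h$ fixes an end point $e$ of $X$, then $h$ fixes some point $o\in X$ with $o\neq e$.
   Context: A dendrite is a locally connected continuum (compact connected metrizable space) containing no simple closed curve; nondegenerate means it has more than one point. An end point of a dendrite $X$ is a point $x$ such that $X\setminus\{x\}$ is connected (i.e. $x$ has order one). *)

theory Defs
  imports "HOL-Analysis.Analysis"
begin

definition continuum :: "'a topology \<Rightarrow> bool" where
  "continuum X \<longleftrightarrow> compact_space X \<and> connected_space X \<and> metrizable_space X"

definition simple_closed_curve_in :: "'a topology \<Rightarrow> 'a set \<Rightarrow> bool" where
  "simple_closed_curve_in X S \<longleftrightarrow> S \<subseteq> topspace X \<and>
     (subtopology X S) homeomorphic_space (top_of_set (sphere (0::complex) 1))"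

definition dendrite :: "'a topology \<Rightarrow> bool" where
  "dendrite X \<longleftrightarrow> continuum X \<and> locally_connected_space X \<and>
     \<not> (\<exists>S. simple_closed_curve_in X S)"

definition end_point :: "'a topology \<Rightarrow> 'a \<Rightarrow> bool" where
  "end_point X x \<longleftrightarrow> x \<in> topspace X \<and> connectedin X (topspace X - {x})"

end

theory Submission
  imports Defs "HOL-Probability.Discrete_Topology"
begin

text \<open>Embedding the dendrite isometrically into a Banach space turns it into a compact, connected,
  locally connected set \<open>S\<close> without simple closed curves. Such a set is locally path connected
  (by Moore's refinement of \<open>\<epsilon>\<close>-chains), so any two of its points are joined by an arc, and this
  arc \<open>[x, y]\<close> is unique, since two different arcs would enclose a circle. As \<open>S - {e}\<close> is
  connected, for \<open>x \<noteq> e\<close> the arcs \<open>[e, x]\<close> and \<open>[e, h x]\<close> share a point \<open>y \<noteq> e\<close>: otherwise the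
  arc from \<open>x\<close> to \<open>h x\<close> inside \<open>S - {e}\<close> would be \<open>[x, e] \<union> [e, h x]\<close>. Both \<open>y\<close> and \<open>h y\<close> lie
  on \<open>[e, h x]\<close>, so after replacing \<open>h\<close> by its inverse if necessary, \<open>y \<in> [e, h y]\<close>. Then the
  orbit of \<open>y\<close> moves monotonically away from \<open>e\<close> along arcs; since arcs between nearby points
  are small, it converges, and its limit is a fixed point other than \<open>e\<close>.\<close>

section \<open>Compact locally connected metric spaces are locally path connected\<close>

definition ulc_modulus :: "'v::metric_space set \<Rightarrow> real \<Rightarrow> real \<Rightarrow> bool" where
  "ulc_modulus S r \<delta> \<longleftrightarrow> (\<forall>x\<in>S. \<forall>y\<in>S. dist x y < \<delta> \<longrightarrow>
     (\<exists>C. connected C \<and> C \<subseteq> S \<inter> ball x r \<and> x \<in> C \<and> y \<in> C))"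

lemma uniformly_locally_connected_compact:
  fixes S :: "'v::metric_space set"
  assumes "compact S" "locally connected S" "r > 0"
  shows "\<exists>\<delta>>0. ulc_modulus S r \<delta>"
proof -
  have "\<exists>U. open U \<and> z \<in> U \<and> connected (S \<inter> U) \<and> S \<inter> U \<subseteq> ball z (r/2)" if "z \<in> S" for z
  proof -
    obtain u where u: "openin (top_of_set S) u" "connected u" "z \<in> u" "u \<subseteq> S \<inter> ball z (r/2)"
      using assms(2,3) \<open>z \<in> S\<close> unfolding locally_connected
      by (metis Int_iff centre_in_ball half_gt_zero openin_open_Int open_ball)
    then obtain U where "open U" "u = S \<inter> U" by (auto simp: openin_open)
    then show ?thesis using u by auto
  qed
  then obtain U where U: "\<And>z. z \<in> S \<Longrightarrow>
      open (U z) \<and> z \<in> U z \<and> connected (S \<inter> U z) \<and> S \<inter> U z \<subseteq> ball z (r/2)"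
    by metis
  have "S \<subseteq> \<Union> (U ` S)" "\<And>G. G \<in> U ` S \<Longrightarrow> open G" using U by blast+
  then obtain \<delta> where "\<delta> > 0" and \<delta>: "\<And>x. x \<in> S \<Longrightarrow> \<exists>G \<in> U ` S. ball x \<delta> \<subseteq> G"
    using Heine_Borel_lemma[OF assms(1)] by blast
  have "\<exists>C. connected C \<and> C \<subseteq> S \<inter> ball x r \<and> x \<in> C \<and> y \<in> C"
    if xy: "x \<in> S" "y \<in> S" "dist x y < \<delta>" for x y
  proof -
    obtain z where z: "z \<in> S" "ball x \<delta> \<subseteq> U z" using \<delta> xy(1) by auto
    have "x \<in> U z" "y \<in> U z" using z xy \<open>\<delta> > 0\<close> by auto
    moreover have "S \<inter> U z \<subseteq> ball x r"
    proof
      fix w assume "w \<in> S \<inter> U z"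
      then have "dist z w < r/2" "dist z x < r/2" using U[OF z(1)] \<open>x \<in> U z\<close> xy(1) by auto
      then show "w \<in> ball x r" by (simp add: dist_commute) (smt (verit) dist_triangle2)
    qed
    ultimately show ?thesis using U[OF z(1)] xy by (intro exI[of _ "S \<inter> U z"]) auto
  qed
  with \<open>\<delta> > 0\<close> show ?thesis unfolding ulc_modulus_def by blast
qed

lemma connected_epsilon_chain:
  fixes C :: "'v::metric_space set"
  assumes "connected C" "x \<in> C" "y \<in> C" "\<delta> > 0"
  obtains c M where "c 0 = x" "\<And>j. j \<ge> M \<Longrightarrow> c j = y" "\<And>j. c j \<in> C"
    "\<And>j. dist (c j) (c (Suc j)) < \<delta>"
proof -
  define reachable where "reachable z \<longleftrightarrow> (\<exists>c M. c 0 = x \<and> (\<forall>j\<ge>M. c j = z) \<and> (\<forall>j. c j \<in> C) \<and>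
      (\<forall>j. dist (c j) (c (Suc j)) < \<delta>))" for z
  have extend: "reachable w" if "reachable z" "w \<in> C" "dist z w < \<delta>" for z w
  proof -
    obtain c M where c: "c 0 = x" "\<forall>j\<ge>M. c j = z" "\<forall>j. c j \<in> C" "\<forall>j. dist (c j) (c (Suc j)) < \<delta>"
      using \<open>reachable z\<close> reachable_def by blast
    define c' where "c' j = (if j \<le> M then c j else w)" for j
    have "dist (c' j) (c' (Suc j)) < \<delta>" for j
      using c that(3) assms(4) by (cases "Suc j \<le> M"; cases "j = M") (auto simp: c'_def)
    then show ?thesis
      unfolding reachable_def using c that(2)
      by (intro exI[of _ c'] exI[of _ "Suc M"]) (auto simp: c'_def)
  qed
  have "reachable x"
    unfolding reachable_def using assms by (intro exI[of _ "\<lambda>_. x"] exI[of _ 0]) auto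
  have "reachable y"
  proof (rule connected_induction_simple[where P = reachable, OF assms(1-3) \<open>reachable x\<close>])
    fix a assume "a \<in> C"
    show "\<exists>T. openin (top_of_set C) T \<and> a \<in> T \<and> (\<forall>u\<in>T. \<forall>v\<in>T. reachable u \<longrightarrow> reachable v)"
    proof (intro exI conjI ballI impI)
      show "openin (top_of_set C) (C \<inter> ball a (\<delta>/2))" by (simp add: openin_open_Int)
      show "a \<in> C \<inter> ball a (\<delta>/2)" using \<open>a \<in> C\<close> assms(4) by simp
      fix u v assume "u \<in> C \<inter> ball a (\<delta>/2)" "v \<in> C \<inter> ball a (\<delta>/2)" "reachable u"
      moreover have "dist u v < \<delta>"
        using calculation(1,2) dist_triangle_half_r[of a u \<delta> v] by (simp add: dist_commute)
      ultimately show "reachable v" using extend by blast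
    qed
  qed
  then show thesis using that reachable_def by blast
qed

text \<open>Chains have \<open>2^L + 1\<close> points so that, read at the dyadic index \<open>\<lfloor>t 2^L\<rfloor>\<close>, they are
  step functions on \<open>[0,1]\<close>, and a refinement, whose length is a power of 2 times the old one,
  gives a comparable step function.\<close>

definition fine_chain :: "'v::metric_space set \<Rightarrow> real \<Rightarrow> nat \<Rightarrow> (nat \<Rightarrow> 'v) \<Rightarrow> bool" where
  "fine_chain S \<delta> L c \<longleftrightarrow> (\<forall>j \<le> 2^L. c j \<in> S) \<and> (\<forall>j < 2^L. dist (c j) (c (Suc j)) < \<delta>)"

lemma fine_chain_concat:
  assumes ch0: "\<And>q. ch q 0 = c q" and chK: "\<And>q. q < 2^L \<Longrightarrow> ch q (2^K) = c (Suc q)"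
    and chS: "\<And>q j. q < 2^L \<Longrightarrow> ch q j \<in> S"
    and chd: "\<And>q j. q < 2^L \<Longrightarrow> dist (ch q j) (ch q (Suc j)) < \<delta>"
    and "c (2^L) \<in> S"
  shows "fine_chain S \<delta> (L + K) (\<lambda>j. ch (j div 2^K) (j mod 2^K))"
proof -
  have low: "j div 2^K < 2^L" if "j < 2^(L + K)" for j :: nat
    using that by (simp add: less_mult_imp_div_less power_add)
  have "ch (j div 2^K) (j mod 2^K) \<in> S" if "j \<le> 2^(L + K)" for j
  proof (cases "j = 2^(L + K)")
    case True
    then show ?thesis using ch0 \<open>c (2^L) \<in> S\<close> by (simp add: power_add)
  qed (use chS low that in simp)
  moreover have "ch (Suc j div 2^K) (Suc j mod 2^K) = ch (j div 2^K) (Suc (j mod 2^K))"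
    if "j < 2^(L + K)" for j
  proof (cases "Suc (j mod 2^K) < 2^K")
    case True
    then show ?thesis by (simp add: div_Suc mod_Suc)
  next
    case False
    moreover have "j mod 2^K < 2^K" by simp
    ultimately have "Suc (j mod 2^K) = 2^K" by linarith
    then show ?thesis using chK[OF low[OF that]] ch0 by (simp add: div_Suc mod_Suc)
  qed
  ultimately show ?thesis using chd low by (simp add: fine_chain_def)
qed

text \<open>Each step of the chain is replaced by a \<open>\<delta>'\<close>-chain inside a small connected set; padding
  these chains to a common length \<open>2^K\<close> keeps the dyadic indexing.\<close>

lemma refine_fine_chain:
  fixes c :: "nat \<Rightarrow> 'v::metric_space"
  assumes chain: "fine_chain S \<delta> L c" and "\<delta>' > 0" "r > 0" and "ulc_modulus S r \<delta>"
  obtains K c' where "fine_chain S \<delta>' (L + K) c'" "c' 0 = c 0" "c' (2^(L + K)) = c (2^L)"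
    "\<And>j. j \<le> 2^(L + K) \<Longrightarrow> dist (c (j div 2^K)) (c' j) < r"
proof -
  have "\<exists>ch M. ch 0 = c q \<and> (q < 2^L \<longrightarrow> (\<forall>j\<ge>M. ch j = c (Suc q)) \<and>
      (\<forall>j. ch j \<in> S \<inter> ball (c q) r \<and> dist (ch j) (ch (Suc j)) < \<delta>'))" for q
  proof (cases "q < 2^L")
    case True
    then have "c q \<in> S" "c (Suc q) \<in> S" "dist (c q) (c (Suc q)) < \<delta>"
      using chain by (simp_all add: fine_chain_def)
    then obtain C where C: "connected C" "C \<subseteq> S \<inter> ball (c q) r" "c q \<in> C" "c (Suc q) \<in> C"
      using \<open>ulc_modulus S r \<delta>\<close> unfolding ulc_modulus_def by blast
    obtain ch M where "ch 0 = c q" "\<And>j. j \<ge> M \<Longrightarrow> ch j = c (Suc q)" "\<And>j. ch j \<in> C"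
      "\<And>j. dist (ch j) (ch (Suc j)) < \<delta>'"
      using connected_epsilon_chain[OF C(1,3,4) \<open>\<delta>' > 0\<close>] by blast
    then show ?thesis using C(2) by blast
  qed auto
  then obtain ch M where ch0: "\<And>q. ch q 0 = c q"
    and chM: "\<And>q j. q < 2^L \<Longrightarrow> j \<ge> M q \<Longrightarrow> ch q j = c (Suc q)"
    and chS: "\<And>q j. q < 2^L \<Longrightarrow> ch q j \<in> S \<inter> ball (c q) r"
    and chd: "\<And>q j. q < 2^L \<Longrightarrow> dist (ch q j) (ch q (Suc j)) < \<delta>'"
    by metis
  define K where "K = Max (M ` {..<2^L})"
  have chK: "ch q (2^K) = c (Suc q)" if "q < 2^L" for q
  proof -
    have "M q \<le> K" unfolding K_def using that by (intro Max_ge) auto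
    also have "K \<le> 2^K" by (simp add: less_imp_le)
    finally show ?thesis using chM[OF that] by simp
  qed
  define c' where "c' j = ch (j div 2^K) (j mod 2^K)" for j
  have "fine_chain S \<delta>' (L + K) c'"
    unfolding c'_def using ch0 chK chS chd chain by (intro fine_chain_concat) (auto simp: fine_chain_def)
  moreover have "c' (2^(L + K)) = c (2^L)" by (simp add: c'_def ch0 power_add)
  moreover have "dist (c (j div 2^K)) (c' j) < r" if "j \<le> 2^(L + K)" for j
  proof (cases "j = 2^(L + K)")
    case True
    then show ?thesis using \<open>c' (2^(L + K)) = c (2^L)\<close> \<open>r > 0\<close> by (simp add: power_add)
  next
    case False
    then have "j div 2^K < 2^L" using that by (simp add: less_mult_imp_div_less power_add)
    then show ?thesis using chS by (simp add: c'_def)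
  qed
  ultimately show thesis using that[of K c'] by (simp add: c'_def ch0)
qed

lemma refining_fine_chains:
  fixes S :: "'v::metric_space set"
  assumes "a \<in> S" "b \<in> S" "\<And>n. d n > 0" "\<And>n. e n > 0" "dist a b < d 0"
    and "\<And>n. ulc_modulus S (e n) (d n)"
  obtains L c where "L 0 = 0" "\<And>n. fine_chain S (d n) (L n) (c n)"
    "\<And>n. c n 0 = a" "\<And>n. c n (2^L n) = b" "\<And>n. L n \<le> L (Suc n)"
    "\<And>n j. j \<le> 2^L (Suc n) \<Longrightarrow> dist (c n (j div 2^(L (Suc n) - L n))) (c (Suc n) j) < e n"
proof -
  define good where "good n Lc \<longleftrightarrow> fine_chain S (d n) (fst Lc) (snd Lc) \<and>
      snd Lc 0 = a \<and> snd Lc (2^fst Lc) = b \<and> (n = 0 \<longrightarrow> fst Lc = 0)"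
    for n and Lc :: "nat \<times> (nat \<Rightarrow> 'v)"
  define refines where "refines n Lc Lc' \<longleftrightarrow> fst Lc \<le> fst Lc' \<and>
      (\<forall>j \<le> 2^fst Lc'. dist (snd Lc (j div 2^(fst Lc' - fst Lc))) (snd Lc' j) < e n)"
    for n and Lc Lc' :: "nat \<times> (nat \<Rightarrow> 'v)"
  have "good 0 (0, \<lambda>j. if j = 0 then a else b)"
    using assms(1,2,5) by (simp add: good_def fine_chain_def le_Suc_eq)
  moreover have "\<exists>Lc'. good (Suc n) Lc' \<and> refines n Lc Lc'" if "good n Lc" for n Lc
  proof -
    have "fine_chain S (d n) (fst Lc) (snd Lc)" using that by (simp add: good_def)
    then obtain K c' where "fine_chain S (d (Suc n)) (fst Lc + K) c'" "c' 0 = snd Lc 0"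
      "c' (2^(fst Lc + K)) = snd Lc (2^fst Lc)"
      "\<And>j. j \<le> 2^(fst Lc + K) \<Longrightarrow> dist (snd Lc (j div 2^K)) (c' j) < e n"
      by (rule refine_fine_chain[OF _ assms(3)[of "Suc n"] assms(4)[of n] assms(6)[of n]]) (rule that)
    then show ?thesis
      using that by (intro exI[of _ "(fst Lc + K, c')"]) (simp add: good_def refines_def)
  qed
  ultimately have "\<exists>f. \<forall>n. good n (f n) \<and> refines n (f n) (f (Suc n))"
    by (intro dependent_nat_choice) auto
  then obtain f where f: "\<And>n. good n (f n)" "\<And>n. refines n (f n) (f (Suc n))" by blast
  show thesis
  proof (rule that[of "\<lambda>n. fst (f n)" "\<lambda>n. snd (f n)"])
    show "fst (f 0) = 0" using f(1)[of 0] by (simp add: good_def)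
  qed (use f in \<open>simp_all add: good_def refines_def\<close>)
qed

lemma dyadic_index_le:
  assumes "t \<in> {0..1}"
  shows "nat \<lfloor>t * 2^L\<rfloor> \<le> 2^L"
proof -
  have "t * 2^L \<le> 2^L" using assms by (simp add: mult_le_cancel_right1)
  then have "\<lfloor>t * 2^L\<rfloor> \<le> 2^L" by (metis floor_mono floor_numeral_power)
  then show ?thesis by (metis nat_le_iff of_nat_numeral of_nat_power)
qed

lemma dyadic_index_div:
  fixes t :: real
  assumes "t \<ge> 0" "n \<le> m"
  shows "nat \<lfloor>t * 2^m\<rfloor> div 2^(m - n) = nat \<lfloor>t * 2^n\<rfloor>"
proof -
  have "(2::real)^m = 2^n * 2^(m - n)" by (metis assms(2) le_add_diff_inverse power_add)
  then have "t * 2^m / real_of_int (2^(m - n)) = t * 2^n" by simp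
  then have "\<lfloor>t * 2^m\<rfloor> div 2^(m - n) = \<lfloor>t * 2^n\<rfloor>"
    using floor_divide_real_eq_div[of "2^(m - n)" "t * 2^m"] by simp
  moreover have "nat (\<lfloor>t * 2^m\<rfloor> div 2^(m - n)) = nat \<lfloor>t * 2^m\<rfloor> div 2^(m - n)"
    using nat_div_distrib[of "\<lfloor>t * 2^m\<rfloor>" "2^(m - n)"] assms by (simp add: nat_power_eq)
  ultimately show ?thesis by simp
qed

lemma dyadic_index_near:
  fixes s t :: real
  assumes "s \<ge> 0" "t \<ge> 0" "dist s t < 1 / 2^L"
  shows "nat \<lfloor>s * 2^L\<rfloor> = nat \<lfloor>t * 2^L\<rfloor> \<or> nat \<lfloor>s * 2^L\<rfloor> = Suc (nat \<lfloor>t * 2^L\<rfloor>) \<or>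
    nat \<lfloor>t * 2^L\<rfloor> = Suc (nat \<lfloor>s * 2^L\<rfloor>)"
proof -
  have "\<bar>s - t\<bar> * 2^L < 1"
    using assms(3) pos_less_divide_eq[of "2^L" "\<bar>s - t\<bar>" 1] by (simp add: dist_real_def)
  then have "\<bar>s * 2^L - t * 2^L\<bar> < 1" by (simp add: abs_mult flip: left_diff_distrib)
  then have "\<bar>\<lfloor>s * 2^L\<rfloor> - \<lfloor>t * 2^L\<rfloor>\<bar> \<le> 1" by linarith
  moreover have "\<lfloor>s * 2^L\<rfloor> \<ge> 0" "\<lfloor>t * 2^L\<rfloor> \<ge> 0" using assms by auto
  ultimately show ?thesis by linarith
qed

lemma fine_chain_sample_close:
  fixes s t :: real
  assumes "fine_chain S \<delta> L c" "s \<in> {0..1}" "t \<in> {0..1}" "dist s t < 1 / 2^L"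
  shows "dist (c (nat \<lfloor>s * 2^L\<rfloor>)) (c (nat \<lfloor>t * 2^L\<rfloor>)) < \<delta>"
proof -
  have step: "dist (c j) (c (Suc j)) < \<delta>" if "Suc j \<le> 2^L" for j
    using assms(1) that by (simp add: fine_chain_def)
  have "dist (c 0) (c (Suc 0)) < \<delta>" using step[of 0] by simp
  then have "\<delta> > 0" using zero_le_dist[of "c 0" "c (Suc 0)"] by linarith
  define i j where "i = nat \<lfloor>s * 2^L\<rfloor>" and "j = nat \<lfloor>t * 2^L\<rfloor>"
  have "i \<le> 2^L" "j \<le> 2^L" using dyadic_index_le assms(2,3) by (simp_all add: i_def j_def)
  moreover have "i = j \<or> i = Suc j \<or> j = Suc i"
    using dyadic_index_near[of s t L] assms(2-4) by (simp add: i_def j_def)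
  ultimately have "dist (c i) (c j) < \<delta>"
    using step[of i] step[of j] \<open>\<delta> > 0\<close> by (auto simp: dist_commute)
  then show ?thesis by (simp add: i_def j_def)
qed

lemma fine_chain_refinement_sample:
  fixes t :: real
  assumes "L \<le> L'" "t \<in> {0..1}" "\<And>j. j \<le> 2^L' \<Longrightarrow> dist (c (j div 2^(L' - L))) (c' j) < r"
  shows "dist (c (nat \<lfloor>t * 2^L\<rfloor>)) (c' (nat \<lfloor>t * 2^L'\<rfloor>)) < r"
  using assms(3)[OF dyadic_index_le[OF assms(2)]] dyadic_index_div[of t L L'] assms(1,2) by simp

lemma dist_geometric_telescope:
  fixes f :: "nat \<Rightarrow> 'v::metric_space"
  assumes "\<And>n. dist (f n) (f (Suc n)) \<le> r / 2^n"
  shows "dist (f m) (f (m + k)) \<le> 2 * r / 2^m - 2 * r / 2^(m + k)"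
proof (induction k)
  case (Suc k)
  have "dist (f m) (f (m + Suc k)) \<le> dist (f m) (f (m + k)) + dist (f (m + k)) (f (Suc (m + k)))"
    by (simp add: dist_triangle)
  also have "\<dots> \<le> 2 * r / 2^m - 2 * r / 2^(m + k) + r / 2^(m + k)"
    using Suc.IH assms[of "m + k"] by linarith
  also have "\<dots> = 2 * r / 2^m - 2 * r / 2^(m + Suc k)" by (simp add: field_simps)
  finally show ?case .
qed simp

lemma geometric_Cauchy_limit:
  fixes f :: "nat \<Rightarrow> 'v::metric_space"
  assumes "compact S" "\<And>n. f n \<in> S" "\<And>n. dist (f n) (f (Suc n)) \<le> r / 2^n"
  shows "\<exists>l\<in>S. f \<longlonglongrightarrow> l \<and> (\<forall>n. dist (f n) l \<le> 2 * r / 2^n)"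
proof -
  have "dist (f 0) (f (Suc 0)) \<le> r" using assms(3)[of 0] by simp
  then have "r \<ge> 0" using zero_le_dist[of "f 0" "f (Suc 0)"] by linarith
  have near: "dist (f m) (f n) \<le> 2 * r / 2^m" if "m \<le> n" for m n
  proof -
    obtain k where n: "n = m + k" using le_Suc_ex \<open>m \<le> n\<close> by blast
    have "0 \<le> 2 * r / 2^(m + k)" using \<open>r \<ge> 0\<close> by simp
    then show ?thesis unfolding n using dist_geometric_telescope[of f r m k, OF assms(3)] by linarith
  qed
  have "Cauchy f"
  proof (rule metric_CauchyI)
    fix \<eta> :: real assume "\<eta> > 0"
    then obtain N where N: "2 * r / 2^N < \<eta> / 2"
      using order_tendstoD(2)[OF LIMSEQ_divide_realpow_zero[of 2 "2 * r"], of "\<eta> / 2"]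
      by (auto simp: eventually_sequentially)
    have "dist (f m) (f n) < \<eta>" if "N \<le> m" "N \<le> n" for m n
      using dist_triangle3[of "f m" "f n" "f N"] near[OF that(1)] near[OF that(2)] N by linarith
    then show "\<exists>M. \<forall>m\<ge>M. \<forall>n\<ge>M. dist (f m) (f n) < \<eta>" by blast
  qed
  then have "\<exists>l\<in>S. f \<longlonglongrightarrow> l"
    using compact_imp_complete[OF assms(1)] assms(2) unfolding complete_def by fast
  then obtain l where "l \<in> S" "f \<longlonglongrightarrow> l" by blast
  moreover have "dist (f n) l \<le> 2 * r / 2^n" for n
    using near by (intro Lim_dist_ubound[OF trivial_limit_sequentially \<open>f \<longlonglongrightarrow> l\<close>])
      (auto intro: eventually_sequentiallyI[of n])
  ultimately show ?thesis by blast
qed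

lemma continuous_on_if_uniform_approximation:
  fixes p :: "'a::metric_space \<Rightarrow> 'v::metric_space"
  assumes "\<epsilon> \<longlonglongrightarrow> 0"
    and err: "\<And>n t. t \<in> A \<Longrightarrow> dist (s n t) (p t) \<le> \<epsilon> n"
    and osc: "\<And>n. \<exists>\<rho>>0. \<forall>x\<in>A. \<forall>y\<in>A. dist x y < \<rho> \<longrightarrow> dist (s n x) (s n y) \<le> \<epsilon> n"
  shows "continuous_on A p"
  unfolding continuous_on_iff
proof (intro ballI allI impI)
  fix t and \<eta> :: real assume t: "t \<in> A" and "\<eta> > 0"
  then obtain n where n: "\<epsilon> n < \<eta> / 3"
    using order_tendstoD(2)[OF assms(1), of "\<eta> / 3"] by (auto simp: eventually_sequentially)
  obtain \<rho> where "\<rho> > 0" and \<rho>: "\<forall>x\<in>A. \<forall>y\<in>A. dist x y < \<rho> \<longrightarrow> dist (s n x) (s n y) \<le> \<epsilon> n"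
    using osc[of n] by blast
  have "dist (p x) (p t) < \<eta>" if "x \<in> A" "dist x t < \<rho>" for x
  proof -
    have "dist (p x) (p t) \<le> dist (s n x) (p x) + dist (s n x) (s n t) + dist (s n t) (p t)"
      using dist_triangle[of "p x" "p t" "s n x"] dist_triangle[of "s n x" "p t" "s n t"]
      by (simp add: dist_commute)
    moreover have "dist (s n x) (s n t) \<le> \<epsilon> n" using \<rho> that t by blast
    ultimately show ?thesis using err[OF that(1), of n] err[OF t, of n] n by linarith
  qed
  then show "\<exists>\<rho>>0. \<forall>x\<in>A. dist x t < \<rho> \<longrightarrow> dist (p x) (p t) < \<eta>"
    using \<open>\<rho> > 0\<close> by (intro exI[of _ \<rho>]) simp
qed

lemma continuous_limit_of_approximations:
  fixes s :: "nat \<Rightarrow> real \<Rightarrow> 'v::metric_space"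
  assumes "compact S"
    and inS: "\<And>n t. t \<in> {0..1} \<Longrightarrow> s n t \<in> S"
    and step: "\<And>n t. t \<in> {0..1} \<Longrightarrow> dist (s n t) (s (Suc n) t) \<le> r / 2^n"
    and osc: "\<And>n. \<exists>\<rho>>0. \<forall>x\<in>{0..1}. \<forall>y\<in>{0..1}. dist x y < \<rho> \<longrightarrow> dist (s n x) (s n y) \<le> 2 * r / 2^n"
  obtains p where "continuous_on {0..1} p" "\<And>t. t \<in> {0..1} \<Longrightarrow> p t \<in> S"
    "\<And>t. t \<in> {0..1} \<Longrightarrow> (\<lambda>n. s n t) \<longlonglongrightarrow> p t"
    "\<And>n t. t \<in> {0..1} \<Longrightarrow> dist (s n t) (p t) \<le> 2 * r / 2^n"
proof -
  have "\<forall>t\<in>{0..1}. \<exists>l. l \<in> S \<and> (\<lambda>n. s n t) \<longlonglongrightarrow> l \<and> (\<forall>n. dist (s n t) l \<le> 2 * r / 2^n)"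
  proof
    fix t :: real assume "t \<in> {0..1}"
    then have "\<exists>l\<in>S. (\<lambda>n. s n t) \<longlonglongrightarrow> l \<and> (\<forall>n. dist (s n t) l \<le> 2 * r / 2^n)"
      by (intro geometric_Cauchy_limit[OF assms(1)] inS step)
    then show "\<exists>l. l \<in> S \<and> (\<lambda>n. s n t) \<longlonglongrightarrow> l \<and> (\<forall>n. dist (s n t) l \<le> 2 * r / 2^n)"
      by blast
  qed
  then have "\<exists>p. \<forall>t\<in>{0..1}. p t \<in> S \<and> (\<lambda>n. s n t) \<longlonglongrightarrow> p t \<and> (\<forall>n. dist (s n t) (p t) \<le> 2 * r / 2^n)"
    by (rule bchoice)
  then obtain p where p: "\<forall>t\<in>{0..1}. p t \<in> S \<and> (\<lambda>n. s n t) \<longlonglongrightarrow> p t \<and>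
      (\<forall>n. dist (s n t) (p t) \<le> 2 * r / 2^n)"
    by blast
  moreover have "continuous_on {0..1} p"
    using p osc by (intro continuous_on_if_uniform_approximation[OF LIMSEQ_divide_realpow_zero]) auto
  ultimately show thesis using that by blast
qed

lemma path_from_refining_fine_chains:
  fixes c :: "nat \<Rightarrow> nat \<Rightarrow> 'v::metric_space"
  assumes "compact S" "r > 0" "L 0 = 0" "\<And>n. d n \<le> r / 2^n"
    and chain: "\<And>n. fine_chain S (d n) (L n) (c n)"
    and start: "\<And>n. c n 0 = a" and finish: "\<And>n. c n (2^L n) = b" and mono: "\<And>n. L n \<le> L (Suc n)"
    and refine: "\<And>n j. j \<le> 2^L (Suc n) \<Longrightarrow> dist (c n (j div 2^(L (Suc n) - L n))) (c (Suc n) j) < r / 2^n"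
  obtains p where "path p" "pathstart p = a" "pathfinish p = b" "path_image p \<subseteq> S \<inter> ball a (3 * r)"
proof -
  define \<sigma> where "\<sigma> n t = c n (nat \<lfloor>t * 2^L n\<rfloor>)" for n and t :: real
  have \<sigma>S: "\<sigma> n t \<in> S" if "t \<in> {0..1}" for n t
    using chain[of n] dyadic_index_le[OF that, of "L n"] by (simp add: \<sigma>_def fine_chain_def)
  have \<sigma>_step: "dist (\<sigma> n t) (\<sigma> (Suc n) t) \<le> r / 2^n" if "t \<in> {0..1}" for n t
    using fine_chain_refinement_sample[where c = "c n" and c' = "c (Suc n)", OF mono that refine]
    by (simp add: \<sigma>_def less_imp_le)
  have \<sigma>_osc: "\<exists>\<rho>>0. \<forall>x\<in>{0..1}. \<forall>y\<in>{0..1}. dist x y < \<rho> \<longrightarrow> dist (\<sigma> n x) (\<sigma> n y) \<le> 2 * r / 2^n" for n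
  proof (intro exI[of _ "1 / 2^L n"] conjI ballI impI)
    fix x y :: real assume "x \<in> {0..1}" "y \<in> {0..1}" "dist x y < 1 / 2^L n"
    then have "dist (\<sigma> n x) (\<sigma> n y) < d n"
      unfolding \<sigma>_def by (rule fine_chain_sample_close[OF chain])
    moreover have "r / 2^n \<le> 2 * r / 2^n" using \<open>r > 0\<close> by (simp add: divide_right_mono)
    ultimately show "dist (\<sigma> n x) (\<sigma> n y) \<le> 2 * r / 2^n" using assms(4)[of n] by linarith
  qed simp
  obtain p where p: "continuous_on {0..1} p" "\<And>t. t \<in> {0..1} \<Longrightarrow> p t \<in> S"
    "\<And>t. t \<in> {0..1} \<Longrightarrow> (\<lambda>n. \<sigma> n t) \<longlonglongrightarrow> p t"
    "\<And>n t. t \<in> {0..1} \<Longrightarrow> dist (\<sigma> n t) (p t) \<le> 2 * r / 2^n"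
    using continuous_limit_of_approximations[OF assms(1) \<sigma>S \<sigma>_step \<sigma>_osc] by blast
  have "p 0 = a" using LIMSEQ_unique[OF p(3)[of 0]] start by (simp add: \<sigma>_def)
  have "p 1 = b" using LIMSEQ_unique[OF p(3)[of 1]] finish by (simp add: \<sigma>_def nat_power_eq)
  have "dist a (p t) < 3 * r" if "t \<in> {0..1}" for t
  proof -
    have "nat \<lfloor>t\<rfloor> \<le> 1" using dyadic_index_le[OF that, of 0] by simp
    then have "\<sigma> 0 t = a \<or> \<sigma> 0 t = b"
      using start[of 0] finish[of 0] by (auto simp: \<sigma>_def \<open>L 0 = 0\<close> le_Suc_eq)
    moreover have "dist a b < r"
      using chain[of 0] start[of 0] finish[of 0] assms(4)[of 0] by (simp add: fine_chain_def \<open>L 0 = 0\<close>)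
    ultimately have "dist a (\<sigma> 0 t) < r" using \<open>r > 0\<close> by auto
    then show ?thesis using dist_triangle[of a "p t" "\<sigma> 0 t"] p(4)[OF that, of 0] by simp
  qed
  show thesis
  proof (rule that)
    show "path p" using p(1) by (simp add: path_def)
    show "pathstart p = a" "pathfinish p = b"
      using \<open>p 0 = a\<close> \<open>p 1 = b\<close> by (simp_all add: pathstart_def pathfinish_def)
    show "path_image p \<subseteq> S \<inter> ball a (3 * r)"
      using p(2) \<open>\<And>t. t \<in> {0..1} \<Longrightarrow> dist a (p t) < 3 * r\<close> by (auto simp: path_image_def)
  qed
qed

lemma compact_locally_connected_small_paths:
  fixes S :: "'v::metric_space set"
  assumes "compact S" "locally connected S" "\<epsilon> > 0"
  obtains \<delta> where "\<delta> > 0"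
    "\<And>a b. a \<in> S \<Longrightarrow> b \<in> S \<Longrightarrow> dist a b < \<delta> \<Longrightarrow>
        \<exists>p. path p \<and> pathstart p = a \<and> pathfinish p = b \<and> path_image p \<subseteq> S \<inter> ball a \<epsilon>"
proof -
  define r where "r = \<epsilon> / 3"
  have "r > 0" using assms(3) by (simp add: r_def)
  have "\<exists>\<delta>>0. \<delta> \<le> r / 2^n \<and> ulc_modulus S (r / 2^n) \<delta>" for n
  proof -
    obtain \<delta> where "\<delta> > 0" "ulc_modulus S (r / 2^n) \<delta>"
      using uniformly_locally_connected_compact[OF assms(1,2), of "r / 2^n"] \<open>r > 0\<close> by auto
    then show ?thesis
      using \<open>r > 0\<close> by (intro exI[of _ "min \<delta> (r / 2^n)"]) (auto simp: ulc_modulus_def)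
  qed
  then obtain d where d: "\<And>n. d n > 0" "\<And>n. d n \<le> r / 2^n" "\<And>n. ulc_modulus S (r / 2^n) (d n)"
    by metis
  show thesis
  proof (rule that[OF d(1)[of 0]])
    fix a b assume ab: "a \<in> S" "b \<in> S" "dist a b < d 0"
    have "\<And>n. r / 2^n > 0" using \<open>r > 0\<close> by simp
    then obtain L c where "L 0 = 0" "\<And>n. fine_chain S (d n) (L n) (c n)"
      "\<And>n. c n 0 = a" "\<And>n. c n (2^L n) = b" "\<And>n. L n \<le> L (Suc n)"
      "\<And>n j. j \<le> 2^L (Suc n) \<Longrightarrow> dist (c n (j div 2^(L (Suc n) - L n))) (c (Suc n) j) < r / 2^n"
      using refining_fine_chains[where e = "\<lambda>n. r / 2^n", OF ab(1,2) d(1) _ ab(3) d(3)] by blast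
    then obtain p where "path p" "pathstart p = a" "pathfinish p = b" "path_image p \<subseteq> S \<inter> ball a (3 * r)"
      using path_from_refining_fine_chains[OF assms(1) \<open>r > 0\<close> _ d(2)] by metis
    then show "\<exists>p. path p \<and> pathstart p = a \<and> pathfinish p = b \<and> path_image p \<subseteq> S \<inter> ball a \<epsilon>"
      by (auto simp: r_def)
  qed
qed

lemma compact_locally_connected_imp_locally_path_connected:
  fixes S :: "'v::metric_space set"
  assumes "compact S" "locally connected S"
  shows "locally path_connected S"
  unfolding locally_path_connected_im_kleinen
proof (intro allI impI)
  fix V x assume "openin (top_of_set S) V \<and> x \<in> V"
  then obtain r where "r > 0" "ball x r \<inter> S \<subseteq> V" "x \<in> S"
    by (meson openin_contains_ball openin_imp_subset subsetD)
  obtain \<delta> where "\<delta> > 0" and \<delta>: "\<And>a b. a \<in> S \<Longrightarrow> b \<in> S \<Longrightarrow> dist a b < \<delta> \<Longrightarrow>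
      \<exists>p. path p \<and> pathstart p = a \<and> pathfinish p = b \<and> path_image p \<subseteq> S \<inter> ball a r"
    by (rule compact_locally_connected_small_paths[OF assms \<open>r > 0\<close>]) (rule that)
  have "\<exists>p. path p \<and> path_image p \<subseteq> V \<and> pathstart p = x \<and> pathfinish p = y"
    if "y \<in> S \<inter> ball x (min \<delta> r)" for y
    using \<delta>[of x y] that \<open>x \<in> S\<close> \<open>ball x r \<inter> S \<subseteq> V\<close> by auto
  moreover have "openin (top_of_set S) (S \<inter> ball x (min \<delta> r))" by (simp add: openin_open_Int)
  ultimately show "\<exists>U. openin (top_of_set S) U \<and> x \<in> U \<and> U \<subseteq> V \<and>
      (\<forall>y. y \<in> U \<longrightarrow> (\<exists>p. path p \<and> path_image p \<subseteq> V \<and> pathstart p = x \<and> pathfinish p = y))"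
    using \<open>x \<in> S\<close> \<open>r > 0\<close> \<open>\<delta> > 0\<close> \<open>ball x r \<inter> S \<subseteq> V\<close>
    by (intro exI[of _ "S \<inter> ball x (min \<delta> r)"]) auto
qed

section \<open>Arcs in sets without simple closed curves\<close>

definition circle_free :: "'a::topological_space set \<Rightarrow> bool" where
  "circle_free S \<longleftrightarrow> (\<forall>T \<subseteq> S. \<not> T homeomorphic sphere (0::complex) 1)"

lemma path_excursion:
  fixes g :: "real \<Rightarrow> 'a::topological_space"
  assumes "path g" "closed P" "g 0 \<in> P" "g 1 \<in> P" "t0 \<in> {0..1}" "g t0 \<notin> P"
  obtains s u where "0 \<le> s" "s < t0" "t0 < u" "u \<le> 1" "g s \<in> P" "g u \<in> P"
    "\<And>t. s < t \<Longrightarrow> t < u \<Longrightarrow> g t \<notin> P"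
proof -
  define T where "T = {0..1} \<inter> g -` P"
  have "continuous_on {0..1} g" using assms(1) by (simp add: path_def)
  then have "closed T"
    unfolding T_def by (rule continuous_closed_preimage[OF _ closed_atLeastAtMost assms(2)])
  define s where "s = Sup (T \<inter> {0..t0})"
  define u where "u = Inf (T \<inter> {t0..1})"
  have "0 \<in> T \<inter> {0..t0}" "1 \<in> T \<inter> {t0..1}" using assms(3-5) by (auto simp: T_def)
  have sT: "s \<in> T \<inter> {0..t0}" unfolding s_def
    by (rule closed_contains_Sup) (use \<open>0 \<in> T \<inter> {0..t0}\<close> \<open>closed T\<close> in \<open>auto simp: bdd_above_def\<close>)
  have uT: "u \<in> T \<inter> {t0..1}" unfolding u_def
    by (rule closed_contains_Inf) (use \<open>1 \<in> T \<inter> {t0..1}\<close> \<open>closed T\<close> in \<open>auto simp: bdd_below_def\<close>)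
  have below: "t \<le> s" if "t \<in> T" "t \<le> t0" for t
    unfolding s_def by (rule cSup_upper) (use that in \<open>auto simp: T_def bdd_above_def\<close>)
  have above: "u \<le> t" if "t \<in> T" "t \<ge> t0" for t
    unfolding u_def by (rule cInf_lower) (use that in \<open>auto simp: T_def bdd_below_def\<close>)
  have "t0 \<notin> T" using assms(6) by (simp add: T_def)
  then have "s < t0" "t0 < u" using sT uT by (auto simp: le_less)
  show thesis
  proof (rule that)
    show "0 \<le> s" "s < t0" "t0 < u" "u \<le> 1" using sT uT \<open>s < t0\<close> \<open>t0 < u\<close> by auto
    show "g s \<in> P" "g u \<in> P" using sT uT by (auto simp: T_def)
    fix t assume "s < t" "t < u"
    then have "t \<notin> T" using below[of t] above[of t] by linarith
    moreover have "t \<in> {0..1}" using sT uT \<open>s < t\<close> \<open>t < u\<close> by auto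
    ultimately show "g t \<notin> P" by (simp add: T_def)
  qed
qed

lemma circle_from_excursion:
  fixes g1 g2 :: "real \<Rightarrow> 'a::real_normed_vector"
  assumes "arc g1" "arc g2" "0 \<le> s" "s < u" "u \<le> 1"
    "g1 s \<in> path_image g2" "g1 u \<in> path_image g2"
    and gap: "\<And>t. s < t \<Longrightarrow> t < u \<Longrightarrow> g1 t \<notin> path_image g2"
  shows "\<exists>T \<subseteq> path_image g1 \<union> path_image g2. T homeomorphic sphere (0::complex) 1"
proof -
  obtain \<sigma> \<tau> where st: "\<sigma> \<in> {0..1}" "\<tau> \<in> {0..1}" "g2 \<sigma> = g1 s" "g2 \<tau> = g1 u"
    using assms(6,7) unfolding path_image_def by auto
  have "g1 s \<noteq> g1 u" using arcD[OF assms(1), of s u] assms(3-5) by auto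
  then have "\<sigma> \<noteq> \<tau>" using st by auto
  define A where "A = subpath s u g1"
  define B where "B = subpath \<tau> \<sigma> g2"
  have "arc A" unfolding A_def using assms(1,3-5) by (intro arc_subpath_arc) auto
  moreover have "arc B" unfolding B_def using assms(2) st \<open>\<sigma> \<noteq> \<tau>\<close> by (intro arc_subpath_arc) auto
  moreover have imA: "path_image A = g1 ` {s..u}" using assms(4) by (simp add: A_def path_image_subpath)
  moreover have imB: "path_image B \<subseteq> path_image g2"
    unfolding B_def using st assms(2) by (intro path_image_subpath_subset) (auto simp: arc_imp_path)
  moreover have "path_image A \<inter> path_image B \<subseteq> {pathstart A, pathstart B}"
  proof
    fix x assume "x \<in> path_image A \<inter> path_image B"
    then obtain t where t: "t \<in> {s..u}" "x = g1 t" "x \<in> path_image g2" using imA imB by auto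
    then have "t = s \<or> t = u" using gap[of t] by force
    then show "x \<in> {pathstart A, pathstart B}" using t st by (auto simp: A_def B_def)
  qed
  ultimately have "simple_path (A +++ B)"
    using st by (intro simple_path_join_loop) (auto simp: A_def B_def)
  then have "path_image (A +++ B) homeomorphic sphere (0::complex) 1"
    using st by (intro homeomorphic_simple_path_image_circle) (auto simp: A_def B_def)
  moreover have "path_image A \<subseteq> path_image g1" using imA assms(3,5) by (auto simp: path_image_def)
  then have "path_image (A +++ B) \<subseteq> path_image g1 \<union> path_image g2"
    using imB path_image_join_subset by blast
  ultimately show ?thesis by blast
qed

lemma arc_image_subset_if_circle_free:
  fixes g1 g2 :: "real \<Rightarrow> 'a::real_normed_vector"
  assumes "circle_free S" "arc g1" "arc g2" "path_image g1 \<subseteq> S" "path_image g2 \<subseteq> S"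
    "pathstart g1 = pathstart g2" "pathfinish g1 = pathfinish g2"
  shows "path_image g1 \<subseteq> path_image g2"
proof (rule ccontr)
  assume "\<not> path_image g1 \<subseteq> path_image g2"
  then obtain t0 where t0: "t0 \<in> {0..1}" "g1 t0 \<notin> path_image g2"
    unfolding path_image_def by (meson image_subset_iff)
  have "closed (path_image g2)" using assms(3) by (simp add: closed_arc_image)
  moreover have "g1 0 \<in> path_image g2" "g1 1 \<in> path_image g2"
    using assms(6,7) pathstart_in_path_image pathfinish_in_path_image
    by (metis pathstart_def pathfinish_def)+
  ultimately obtain s u where "0 \<le> s" "s < t0" "t0 < u" "u \<le> 1"
    "g1 s \<in> path_image g2" "g1 u \<in> path_image g2"
    and gap: "\<And>t. s < t \<Longrightarrow> t < u \<Longrightarrow> g1 t \<notin> path_image g2"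
    using path_excursion[OF arc_imp_path[OF assms(2)] _ _ _ t0] by blast
  then obtain T where "T \<subseteq> path_image g1 \<union> path_image g2" "T homeomorphic sphere (0::complex) 1"
    using circle_from_excursion[OF assms(2,3)] by (meson order.strict_trans)
  moreover have "T \<subseteq> S" using calculation(1) assms(4,5) by blast
  ultimately show False using assms(1) by (auto simp: circle_free_def)
qed

lemma arc_image_unique_if_circle_free:
  fixes g1 g2 :: "real \<Rightarrow> 'a::real_normed_vector"
  assumes "circle_free S" "arc g1" "arc g2" "path_image g1 \<subseteq> S" "path_image g2 \<subseteq> S"
    "pathstart g1 = pathstart g2" "pathfinish g1 = pathfinish g2"
  shows "path_image g1 = path_image g2"
  using arc_image_subset_if_circle_free[OF assms]
    arc_image_subset_if_circle_free[OF assms(1,3,2,5,4) assms(6,7)[symmetric]] by blast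

lemma arc_in_connected_open_subset:
  fixes S :: "'v::{real_normed_vector,complete_space} set"
  assumes "locally path_connected S" "openin (top_of_set S) T" "connected T"
    "u \<in> T" "v \<in> T" "u \<noteq> v"
  obtains \<gamma> where "arc \<gamma>" "pathstart \<gamma> = u" "pathfinish \<gamma> = v" "path_image \<gamma> \<subseteq> T"
proof -
  have "locally path_connected T" by (rule locally_open_subset[OF assms(1,2)])
  then have "path_component_set T u = T"
    using path_component_eq_connected_component_set connected_component_eq_self assms(3,4) by metis
  then have "path_component T u v" using assms(5) by (metis mem_Collect_eq)
  then obtain g where g: "path g" "path_image g \<subseteq> T" "pathstart g = u" "pathfinish g = v"
    unfolding path_component_def by blast
  obtain q where "arc q" "path_image q \<subseteq> path_image g" "pathstart q = u" "pathfinish q = v"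
    using path_contains_arc[OF g(1,3,4) assms(6)] by blast
  with g(2) show thesis by (intro that[of q]) auto
qed

section \<open>Arcs in a dendrite\<close>

locale dendrite_set =
  fixes S :: "'v::{real_normed_vector,complete_space} set"
  assumes compact_S: "compact S" and connected_S: "connected S"
    and locally_connected_S: "locally connected S" and circle_free_S: "circle_free S"
begin

lemma locally_path_connected_S: "locally path_connected S"
  by (rule compact_locally_connected_imp_locally_path_connected[OF compact_S locally_connected_S])

definition arc_between :: "'v \<Rightarrow> 'v \<Rightarrow> 'v set" where
  "arc_between x y = (if x = y then {x} else
     path_image (SOME \<gamma>. arc \<gamma> \<and> pathstart \<gamma> = x \<and> pathfinish \<gamma> = y \<and> path_image \<gamma> \<subseteq> S))"

lemma arc_between_refl [simp]: "arc_between x x = {x}"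
  by (simp add: arc_between_def)

lemma arc_between_eq_path_image:
  assumes "arc \<gamma>" "pathstart \<gamma> = x" "pathfinish \<gamma> = y" "path_image \<gamma> \<subseteq> S"
  shows "arc_between x y = path_image \<gamma>"
proof -
  have "x \<noteq> y" using arc_distinct_ends assms(1-3) by metis
  define \<beta> where "\<beta> = (SOME \<gamma>. arc \<gamma> \<and> pathstart \<gamma> = x \<and> pathfinish \<gamma> = y \<and> path_image \<gamma> \<subseteq> S)"
  have "arc \<beta> \<and> pathstart \<beta> = x \<and> pathfinish \<beta> = y \<and> path_image \<beta> \<subseteq> S"
    unfolding \<beta>_def by (rule someI[of _ \<gamma>]) (use assms in auto)
  then have "path_image \<beta> = path_image \<gamma>"
    using arc_image_unique_if_circle_free[OF circle_free_S] assms by metis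
  then show ?thesis using \<open>x \<noteq> y\<close> by (simp add: arc_between_def \<beta>_def)
qed

lemma arc_betweenE:
  assumes "x \<in> S" "y \<in> S" "x \<noteq> y"
  obtains \<gamma> where "arc \<gamma>" "pathstart \<gamma> = x" "pathfinish \<gamma> = y" "path_image \<gamma> \<subseteq> S"
    "arc_between x y = path_image \<gamma>"
proof -
  obtain \<gamma> where "arc \<gamma>" "pathstart \<gamma> = x" "pathfinish \<gamma> = y" "path_image \<gamma> \<subseteq> S"
    by (rule arc_in_connected_open_subset[OF locally_path_connected_S openin_subtopology_self
          connected_S assms])
  with arc_between_eq_path_image show thesis by (intro that) auto
qed

lemma arc_between_parametrization:
  assumes "x \<in> S" "y \<in> S"
  obtains \<gamma> :: "real \<Rightarrow> 'v" where "\<gamma> 0 = x" "\<gamma> 1 = y" "arc_between x y = \<gamma> ` {0..1}"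
    "\<And>t. t \<in> {0..1} \<Longrightarrow> arc_between x (\<gamma> t) = \<gamma> ` {0..t}"
    "\<And>t. t \<in> {0..1} \<Longrightarrow> arc_between (\<gamma> t) y = \<gamma> ` {t..1}"
proof (cases "x = y")
  case True
  show thesis by (rule that[of "\<lambda>_. x"]) (auto simp: True image_constant_conv)
next
  case False
  then obtain \<gamma> where \<gamma>: "arc \<gamma>" "pathstart \<gamma> = x" "pathfinish \<gamma> = y" "path_image \<gamma> \<subseteq> S"
    "arc_between x y = path_image \<gamma>"
    using arc_betweenE assms by metis
  have "arc_between x (\<gamma> t) = \<gamma> ` {0..t}" if "t \<in> {0..1}" for t
  proof (cases "t = 0")
    case False
    then have "arc (subpath 0 t \<gamma>)" using \<gamma>(1) that by (intro arc_subpath_arc) auto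
    moreover have "path_image (subpath 0 t \<gamma>) = \<gamma> ` {0..t}" using that by (simp add: path_image_subpath)
    moreover have "\<gamma> ` {0..t} \<subseteq> S" using \<gamma>(4) that by (auto simp: path_image_def)
    ultimately show ?thesis
      using arc_between_eq_path_image \<gamma>(2) by (metis pathstart_subpath pathfinish_subpath pathstart_def)
  qed (use \<gamma>(2) in \<open>simp add: pathstart_def\<close>)
  moreover have "arc_between (\<gamma> t) y = \<gamma> ` {t..1}" if "t \<in> {0..1}" for t
  proof (cases "t = 1")
    case False
    then have "arc (subpath t 1 \<gamma>)" using \<gamma>(1) that by (intro arc_subpath_arc) auto
    moreover have "path_image (subpath t 1 \<gamma>) = \<gamma> ` {t..1}" using that by (simp add: path_image_subpath)
    moreover have "\<gamma> ` {t..1} \<subseteq> S" using \<gamma>(4) that by (auto simp: path_image_def)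
    ultimately show ?thesis
      using arc_between_eq_path_image \<gamma>(3) by (metis pathstart_subpath pathfinish_subpath pathfinish_def)
  qed (use \<gamma>(3) in \<open>simp add: pathfinish_def\<close>)
  ultimately show thesis
    using \<gamma>(2,3,5) by (intro that[of \<gamma>]) (auto simp: pathstart_def pathfinish_def path_image_def)
qed

lemma arc_between_subset: "x \<in> S \<Longrightarrow> y \<in> S \<Longrightarrow> arc_between x y \<subseteq> S"
  by (metis arc_betweenE arc_between_refl empty_subsetI insert_subset)

lemma ends_mem_arc_between:
  assumes "x \<in> S" "y \<in> S"
  shows "x \<in> arc_between x y" "y \<in> arc_between x y"
proof -
  obtain \<gamma> :: "real \<Rightarrow> 'v" where "\<gamma> 0 = x" "\<gamma> 1 = y" "arc_between x y = \<gamma> ` {0..1}"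
    using arc_between_parametrization[OF assms] by metis
  moreover have "\<gamma> 0 \<in> \<gamma> ` {0..1}" "\<gamma> 1 \<in> \<gamma> ` {0..1}" by auto
  ultimately show "x \<in> arc_between x y" "y \<in> arc_between x y" by simp_all
qed

lemma arc_between_mono:
  assumes "e \<in> S" "c \<in> S" "b \<in> arc_between e c"
  shows "arc_between e b \<subseteq> arc_between e c"
proof -
  obtain \<gamma> :: "real \<Rightarrow> 'v" where "arc_between e c = \<gamma> ` {0..1}" and \<gamma>: "\<And>t. t \<in> {0..1} \<Longrightarrow> arc_between e (\<gamma> t) = \<gamma> ` {0..t}"
    using arc_between_parametrization[OF assms(1,2)] by metis
  then obtain t where "t \<in> {0..1}" "b = \<gamma> t" using assms(3) by auto
  then have "arc_between e b = \<gamma> ` {0..t}" using \<gamma> by simp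
  also have "\<dots> \<subseteq> \<gamma> ` {0..1}" using \<open>t \<in> {0..1}\<close> by (intro image_mono) auto
  finally show ?thesis using \<open>arc_between e c = \<gamma> ` {0..1}\<close> by simp
qed

lemma arc_between_linear:
  assumes "e \<in> S" "w \<in> S" "a \<in> arc_between e w" "b \<in> arc_between e w"
  shows "a \<in> arc_between e b \<or> b \<in> arc_between e a"
proof -
  obtain \<gamma> :: "real \<Rightarrow> 'v" where "arc_between e w = \<gamma> ` {0..1}" and \<gamma>: "\<And>t. t \<in> {0..1} \<Longrightarrow> arc_between e (\<gamma> t) = \<gamma> ` {0..t}"
    using arc_between_parametrization[OF assms(1,2)] by metis
  then obtain s t where st: "s \<in> {0..1}" "t \<in> {0..1}" "a = \<gamma> s" "b = \<gamma> t"
    using assms(3,4) by auto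
  show ?thesis
  proof (cases "s \<le> t")
    case True
    then have "a \<in> \<gamma> ` {0..t}" using st by auto
    then show ?thesis using \<gamma>[OF st(2)] st(4) by simp
  next
    case False
    then have "b \<in> \<gamma> ` {0..s}" using st by auto
    then show ?thesis using \<gamma>[OF st(1)] st(3) by simp
  qed
qed

lemma mem_arc_between_if_between:
  assumes "e \<in> S" "b \<in> S" "a \<in> arc_between e c" "c \<in> arc_between e b"
  shows "c \<in> arc_between a b"
proof -
  obtain \<gamma> :: "real \<Rightarrow> 'v" where "arc_between e b = \<gamma> ` {0..1}"
    and \<gamma>0: "\<And>t. t \<in> {0..1} \<Longrightarrow> arc_between e (\<gamma> t) = \<gamma> ` {0..t}"
    and \<gamma>1: "\<And>t. t \<in> {0..1} \<Longrightarrow> arc_between (\<gamma> t) b = \<gamma> ` {t..1}"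
    using arc_between_parametrization[OF assms(1,2)] by metis
  then obtain u where u: "u \<in> {0..1}" "c = \<gamma> u" using assms(4) by auto
  then obtain s where s: "s \<in> {0..u}" "a = \<gamma> s" using assms(3) \<gamma>0 by auto
  then have "arc_between a b = \<gamma> ` {s..1}" using u(1) \<gamma>1[of s] by simp
  moreover have "c \<in> \<gamma> ` {s..1}" using s(1) u by auto
  ultimately show ?thesis by simp
qed

lemma homeomorphism_image_arc_between:
  assumes f: "homeomorphism S S f g" and "x \<in> S" "y \<in> S"
  shows "f ` arc_between x y = arc_between (f x) (f y)"
proof (cases "x = y")
  case False
  then obtain \<gamma> where \<gamma>: "arc \<gamma>" "pathstart \<gamma> = x" "pathfinish \<gamma> = y" "path_image \<gamma> \<subseteq> S"
    "arc_between x y = path_image \<gamma>"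
    using arc_betweenE assms(2,3) by metis
  have "continuous_on S f" "inj_on f S" "f ` S = S"
    using homeomorphism_cont1[OF f] homeomorphism_apply1[OF f] homeomorphism_image1[OF f]
    by (auto intro: inj_on_inverseI)
  then have "arc (f \<circ> \<gamma>)"
    using \<gamma>(1,4) arc_imp_inj_on[OF \<gamma>(1)]
    by (auto simp: arc_def path_image_def intro!: path_continuous_image comp_inj_on
        intro: continuous_on_subset inj_on_subset)
  moreover have "path_image (f \<circ> \<gamma>) \<subseteq> S"
    using \<gamma>(4) \<open>f ` S = S\<close> by (auto simp: path_image_compose)
  ultimately have "arc_between (f x) (f y) = path_image (f \<circ> \<gamma>)"
    using \<gamma>(2,3) by (intro arc_between_eq_path_image) (auto simp: pathstart_def pathfinish_def)
  then show ?thesis using \<gamma>(5) by (simp add: path_image_compose)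
qed simp

lemma arc_between_small:
  assumes "r > 0"
  obtains \<delta> where "\<delta> > 0" "\<And>u v. u \<in> S \<Longrightarrow> v \<in> S \<Longrightarrow> dist u v < \<delta> \<Longrightarrow> arc_between u v \<subseteq> ball u r"
proof -
  obtain \<delta> where "\<delta> > 0" and \<delta>: "\<And>a b. a \<in> S \<Longrightarrow> b \<in> S \<Longrightarrow> dist a b < \<delta> \<Longrightarrow>
      \<exists>p. path p \<and> pathstart p = a \<and> pathfinish p = b \<and> path_image p \<subseteq> S \<inter> ball a r"
    using compact_locally_connected_small_paths[OF compact_S locally_connected_S assms] by blast
  have "arc_between u v \<subseteq> ball u r" if uv: "u \<in> S" "v \<in> S" "dist u v < \<delta>" for u v
  proof (cases "u = v")
    case False
    obtain p where p: "path p" "pathstart p = u" "pathfinish p = v" "path_image p \<subseteq> S \<inter> ball u r"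
      using \<delta>[OF uv] by blast
    then obtain \<gamma> where "arc \<gamma>" "path_image \<gamma> \<subseteq> path_image p" "pathstart \<gamma> = u" "pathfinish \<gamma> = v"
      using path_contains_arc[OF p(1-3) False] by blast
    then show ?thesis using arc_between_eq_path_image p(4) by (metis le_inf_iff order_trans)
  qed (use assms in simp)
  with \<open>\<delta> > 0\<close> show thesis by (rule that)
qed


lemma arcs_from_end_point_overlap:
  assumes "e \<in> S" "connected (S - {e})" "x \<in> S" "x \<noteq> e" "x' \<in> S" "x' \<noteq> e"
  obtains y where "y \<in> arc_between e x" "y \<in> arc_between e x'" "y \<noteq> e"
proof (cases "x = x'")
  case True
  then show thesis using that ends_mem_arc_between(2)[OF assms(1,3)] assms(4) by blast
next
  case False
  show thesis
  proof (rule ccontr)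
    assume "\<not> thesis"
    then have meet: "arc_between e x \<inter> arc_between e x' \<subseteq> {e}" using that by blast
    obtain \<alpha> where \<alpha>: "arc \<alpha>" "pathstart \<alpha> = e" "pathfinish \<alpha> = x" "path_image \<alpha> \<subseteq> S"
      "arc_between e x = path_image \<alpha>"
      using arc_betweenE[OF assms(1,3)] assms(4) by metis
    obtain \<beta> where \<beta>: "arc \<beta>" "pathstart \<beta> = e" "pathfinish \<beta> = x'" "path_image \<beta> \<subseteq> S"
      "arc_between e x' = path_image \<beta>"
      using arc_betweenE[OF assms(1,5)] assms(6) by metis
    have "arc (reversepath \<alpha> +++ \<beta>)"
      using \<alpha> \<beta> meet by (intro arc_join) (auto simp: arc_reversepath)
    have "openin (top_of_set S) (S \<inter> - {e})" by (rule openin_open_Int) auto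
    then have "openin (top_of_set S) (S - {e})" by (simp add: Diff_eq)
    then obtain \<gamma> where \<gamma>: "arc \<gamma>" "pathstart \<gamma> = x" "pathfinish \<gamma> = x'" "path_image \<gamma> \<subseteq> S - {e}"
      using arc_in_connected_open_subset[OF locally_path_connected_S _ assms(2)] assms(3-6) False
      by blast
    have "path_image \<gamma> = path_image (reversepath \<alpha> +++ \<beta>)"
      using \<gamma> \<alpha> \<beta> \<open>arc (reversepath \<alpha> +++ \<beta>)\<close>
      by (intro arc_image_unique_if_circle_free[OF circle_free_S]) (auto simp: path_image_join)
    moreover have "e \<in> path_image \<beta>" using \<beta>(2) pathstart_in_path_image by metis
    then have "e \<in> path_image (reversepath \<alpha> +++ \<beta>)" using \<alpha>(2) \<beta>(2) by (simp add: path_image_join)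
    ultimately show False using \<gamma>(4) by blast
  qed
qed

lemma convergent_if_monotone_along_arcs:
  assumes "e \<in> S" and zS: "\<And>n. z n \<in> S" and mono: "\<And>m n. m \<le> n \<Longrightarrow> z m \<in> arc_between e (z n)"
  shows "\<exists>p\<in>S. z \<longlonglongrightarrow> p"
proof -
  obtain p \<phi> where "p \<in> S" "strict_mono \<phi>" "(z \<circ> \<phi>) \<longlonglongrightarrow> p"
    using compact_imp_seq_compact[OF compact_S] zS unfolding seq_compact_def by metis
  have cluster: "\<exists>n\<ge>N. dist (z n) p < \<delta>" if "\<delta> > 0" for \<delta> N
  proof -
    obtain M where "\<forall>k\<ge>M. dist (z (\<phi> k)) p < \<delta>"
      using \<open>(z \<circ> \<phi>) \<longlonglongrightarrow> p\<close> \<open>\<delta> > 0\<close> unfolding lim_sequentially by auto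
    moreover have "\<phi> (max M N) \<ge> N"
      using seq_suble[OF \<open>strict_mono \<phi>\<close>] by (meson max.cobounded2 order_trans)
    ultimately show ?thesis by auto
  qed
  have "z \<longlonglongrightarrow> p"
    unfolding lim_sequentially
  proof (intro allI impI)
    fix \<eta> :: real assume "\<eta> > 0"
    then obtain \<delta> where "\<delta> > 0"
      and \<delta>: "\<And>u v. u \<in> S \<Longrightarrow> v \<in> S \<Longrightarrow> dist u v < \<delta> \<Longrightarrow> arc_between u v \<subseteq> ball u (\<eta> / 2)"
      using arc_between_small[of "\<eta> / 2"] by auto
    define \<rho> where "\<rho> = min \<delta> \<eta> / 2"
    have "\<rho> > 0" using \<open>\<delta> > 0\<close> \<open>\<eta> > 0\<close> by (simp add: \<rho>_def)
    then obtain a where a: "dist (z a) p < \<rho>" using cluster by blast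
    have "dist (z n) p < \<eta>" if "a \<le> n" for n
    proof -
      obtain b where "b \<ge> n" "dist (z b) p < \<rho>" using cluster \<open>\<rho> > 0\<close> by blast
      then have "dist (z a) (z b) < \<delta>"
        using a dist_triangle3[of "z a" "z b" p] by (simp add: \<rho>_def dist_commute)
      moreover have "z n \<in> arc_between (z a) (z b)"
        using mem_arc_between_if_between[OF assms(1) zS mono[OF that] mono[OF \<open>b \<ge> n\<close>]] .
      ultimately have "dist (z a) (z n) < \<eta> / 2" using \<delta> zS by fastforce
      then show ?thesis
        using a dist_triangle3[of "z n" p "z a"] by (simp add: \<rho>_def dist_commute)
    qed
    then show "\<exists>no. \<forall>n\<ge>no. dist (z n) p < \<eta>" by blast
  qed
  with \<open>p \<in> S\<close> show ?thesis by blast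
qed

lemma orbit_monotone_along_arcs:
  assumes f: "homeomorphism S S f g" and "e \<in> S" "f e = e"
    and "y \<in> S" "y \<in> arc_between e (f y)" "m \<le> n"
  shows "(f ^^ m) y \<in> arc_between e ((f ^^ n) y)"
proof -
  have orbit: "(f ^^ n) y \<in> S" for n
    by (induction n) (use \<open>y \<in> S\<close> homeomorphism_image1[OF f] in auto)
  have orbit_step: "(f ^^ n) y \<in> arc_between e ((f ^^ Suc n) y)" for n
  proof (induction n)
    case (Suc n)
    then have "f ((f ^^ n) y) \<in> f ` arc_between e ((f ^^ Suc n) y)" by blast
    also have "\<dots> = arc_between e ((f ^^ Suc (Suc n)) y)"
      using homeomorphism_image_arc_between[OF f \<open>e \<in> S\<close> orbit[of "Suc n"]] \<open>f e = e\<close> by simp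
    finally show ?case by simp
  qed (use assms(5) in simp)
  show ?thesis
    using \<open>m \<le> n\<close>
  proof (induction n rule: dec_induct)
    case base
    show ?case using ends_mem_arc_between(2)[OF \<open>e \<in> S\<close> orbit] .
  next
    case (step n)
    then show ?case using arc_between_mono[OF \<open>e \<in> S\<close> orbit orbit_step[of n]] by blast
  qed
qed

lemma fixed_point_if_moved_away_along_arc:
  assumes f: "homeomorphism S S f g" and "e \<in> S" "f e = e"
    and y: "y \<in> S" "y \<noteq> e" "y \<in> arc_between e (f y)"
  shows "\<exists>p\<in>S. p \<noteq> e \<and> f p = p"
proof -
  define z where "z n = (f ^^ n) y" for n
  have zS: "z n \<in> S" for n
    unfolding z_def by (induction n) (use y(1) homeomorphism_image1[OF f] in auto)
  have mono: "z m \<in> arc_between e (z n)" if "m \<le> n" for m n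
    unfolding z_def using orbit_monotone_along_arcs[OF f \<open>e \<in> S\<close> \<open>f e = e\<close> y(1,3) that] .
  have "\<exists>p\<in>S. z \<longlonglongrightarrow> p" using convergent_if_monotone_along_arcs[OF \<open>e \<in> S\<close> zS mono] .
  then obtain p where "p \<in> S" "z \<longlonglongrightarrow> p" by blast
  have "(\<lambda>n. f (z n)) \<longlonglongrightarrow> f p"
    using continuous_on_tendsto_compose[OF homeomorphism_cont1[OF f] \<open>z \<longlonglongrightarrow> p\<close> \<open>p \<in> S\<close>] zS by simp
  moreover have "(\<lambda>n. f (z n)) \<longlonglongrightarrow> p"
    using LIMSEQ_Suc[OF \<open>z \<longlonglongrightarrow> p\<close>] by (simp add: z_def)
  ultimately have "f p = p" by (rule LIMSEQ_unique)
  moreover have "p \<noteq> e"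
  proof
    assume "p = e"
    have "dist e y > 0" using y(2) by simp
    then obtain \<delta> where "\<delta> > 0"
      and \<delta>: "\<And>u v. u \<in> S \<Longrightarrow> v \<in> S \<Longrightarrow> dist u v < \<delta> \<Longrightarrow> arc_between u v \<subseteq> ball u (dist e y)"
      using arc_between_small by blast
    obtain n where "dist (z n) e < \<delta>"
      using \<open>z \<longlonglongrightarrow> p\<close> \<open>p = e\<close> \<open>\<delta> > 0\<close> unfolding lim_sequentially by (metis order_refl)
    then have "arc_between e (z n) \<subseteq> ball e (dist e y)"
      using \<delta> \<open>e \<in> S\<close> zS by (simp add: dist_commute)
    moreover have "y \<in> arc_between e (z n)" using mono[of 0 n] by (simp add: z_def)
    ultimately show False by auto
  qed
  ultimately show ?thesis using \<open>p \<in> S\<close> by blast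
qed

lemma homeomorphism_fixes_point_other_than_end_point:
  assumes f: "homeomorphism S S f g" and "e \<in> S" "f e = e" "connected (S - {e})"
    and "x \<in> S" "x \<noteq> e"
  shows "\<exists>p\<in>S. p \<noteq> e \<and> f p = p"
proof -
  have g: "homeomorphism S S g f" using f by (rule homeomorphism_symD)
  have "g e = e" using homeomorphism_apply1[OF f \<open>e \<in> S\<close>] \<open>f e = e\<close> by simp
  have "f x \<in> S" using homeomorphism_image1[OF f] \<open>x \<in> S\<close> by blast
  moreover have "f x \<noteq> e"
    using homeomorphism_apply1[OF f \<open>x \<in> S\<close>] homeomorphism_apply1[OF f \<open>e \<in> S\<close>] \<open>f e = e\<close> \<open>x \<noteq> e\<close>
    by metis
  ultimately obtain y where y: "y \<in> arc_between e x" "y \<in> arc_between e (f x)" "y \<noteq> e"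
    by (rule arcs_from_end_point_overlap[OF \<open>e \<in> S\<close> assms(4,5,6)])
  have "y \<in> S" using y(1) arc_between_subset[OF \<open>e \<in> S\<close> \<open>x \<in> S\<close>] by blast
  have "f ` arc_between e x = arc_between e (f x)"
    using homeomorphism_image_arc_between[OF f \<open>e \<in> S\<close> \<open>x \<in> S\<close>] \<open>f e = e\<close> by simp
  then have "f y \<in> arc_between e (f x)" using y(1) by blast
  then consider "y \<in> arc_between e (f y)" | "f y \<in> arc_between e y"
    using arc_between_linear[OF \<open>e \<in> S\<close> \<open>f x \<in> S\<close> y(2)] by blast
  then show ?thesis
  proof cases
    case 1
    then show ?thesis by (rule fixed_point_if_moved_away_along_arc[OF f \<open>e \<in> S\<close> \<open>f e = e\<close> \<open>y \<in> S\<close> y(3)])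
  next
    case 2
    moreover have "g ` arc_between e y = arc_between e (g y)"
      using homeomorphism_image_arc_between[OF g \<open>e \<in> S\<close> \<open>y \<in> S\<close>] \<open>g e = e\<close> by simp
    ultimately have "g (f y) \<in> arc_between e (g y)" by blast
    then have "y \<in> arc_between e (g y)" using homeomorphism_apply1[OF f \<open>y \<in> S\<close>] by simp
    then obtain p where "p \<in> S" "p \<noteq> e" "g p = p"
      using fixed_point_if_moved_away_along_arc[OF g \<open>e \<in> S\<close> \<open>g e = e\<close> \<open>y \<in> S\<close> y(3)] by blast
    moreover have "f p = p" using homeomorphism_apply2[OF f \<open>p \<in> S\<close>] \<open>g p = p\<close> by simp
    ultimately show ?thesis by blast
  qed
qed

end

section \<open>Embedding an abstract dendrite into a Banach space\<close>

lemma continuous_on_discrete_domain: "continuous_on UNIV (f :: 'a discrete \<Rightarrow> 'b::topological_space)"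
  unfolding continuous_on_open_invariant by (auto intro!: exI[of _ "f -` _"] simp: open_discrete)

text \<open>Kuratowski's embedding \<open>u \<mapsto> d u - d x\<^sub>0\<close>; the functions are indexed by the points of
  the carrier type, wrapped in \<^typ>\<open>'a discrete\<close> so that they are trivially continuous.\<close>

lemma (in Metric_space) isometry_into_bcontfun:
  obtains \<phi> :: "'a \<Rightarrow> ('a discrete \<Rightarrow>\<^sub>C real)" where "\<And>u v. u \<in> M \<Longrightarrow> v \<in> M \<Longrightarrow> dist (\<phi> u) (\<phi> v) = d u v"
proof -
  define x0 where "x0 = (SOME x. x \<in> M)"
  define F where "F u z = (if of_discrete z \<in> M then d u (of_discrete z) - d x0 (of_discrete z) else 0)"
    for u and z :: "'a discrete"
  have "F u \<in> bcontfun" if "u \<in> M" for u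
  proof (rule bcontfun_normI[OF continuous_on_discrete_domain])
    have "x0 \<in> M" using that by (metis someI x0_def)
    fix z :: "'a discrete"
    show "norm (F u z) \<le> d u x0"
    proof (cases "of_discrete z \<in> M")
      case True
      then have "d u (of_discrete z) \<le> d u x0 + d x0 (of_discrete z)"
        "d x0 (of_discrete z) \<le> d x0 u + d u (of_discrete z)"
        using that \<open>x0 \<in> M\<close> triangle by blast+
      then show ?thesis using True commute[of x0 u] by (simp add: F_def abs_le_iff)
    qed (simp add: F_def that \<open>x0 \<in> M\<close>)
  qed
  then have F: "apply_bcontfun (Bcontfun (F u)) = F u" if "u \<in> M" for u
    using that by (simp add: Bcontfun_inverse)
  have "dist (Bcontfun (F u)) (Bcontfun (F v)) = d u v" if "u \<in> M" "v \<in> M" for u v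
  proof (rule antisym)
    show "dist (Bcontfun (F u)) (Bcontfun (F v)) \<le> d u v"
    proof (rule dist_bound)
      fix z :: "'a discrete"
      show "dist (Bcontfun (F u) z) (Bcontfun (F v) z) \<le> d u v"
      proof (cases "of_discrete z \<in> M")
        case True
        then have "d u (of_discrete z) \<le> d u v + d v (of_discrete z)"
          "d v (of_discrete z) \<le> d v u + d u (of_discrete z)"
          using that triangle by blast+
        then show ?thesis
          using True commute[of v u] that by (simp add: F F_def dist_real_def abs_le_iff)
      qed (simp add: F that F_def)
    qed
    have "dist (Bcontfun (F u) (discrete v)) (Bcontfun (F v) (discrete v)) = d u v"
      using that by (simp add: F F_def dist_real_def discrete_inverse)
    then show "d u v \<le> dist (Bcontfun (F u)) (Bcontfun (F v))"
      using dist_bounded by metis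
  qed
  then show thesis by (rule that)
qed

lemma metrizable_space_homeomorphic_subset_bcontfun:
  fixes X :: "'a topology"
  assumes "metrizable_space X"
  obtains S :: "('a discrete \<Rightarrow>\<^sub>C real) set" and \<phi> \<psi> where "homeomorphic_maps X (top_of_set S) \<phi> \<psi>"
proof -
  obtain M d where "Metric_space M d" and X: "X = Metric_space.mtopology M d"
    using assms by (auto simp: metrizable_space_def)
  interpret Metric_space M d by fact
  obtain \<phi> :: "'a \<Rightarrow> ('a discrete \<Rightarrow>\<^sub>C real)" where "\<And>u v. u \<in> M \<Longrightarrow> v \<in> M \<Longrightarrow> dist (\<phi> u) (\<phi> v) = d u v"
    by (rule isometry_into_bcontfun) (rule that)
  moreover have "Metric_space12 M d UNIV dist"
    by (simp add: Metric_space12_def Metric_space_axioms Met_TC.Metric_space_axioms)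
  ultimately have "embedding_map mtopology (Metric_space.mtopology UNIV dist) \<phi>"
    by (intro Metric_space12.isometry_imp_embedding_map) auto
  then show thesis
    using that unfolding embedding_map_def homeomorphic_map_maps X by auto
qed

lemma homeomorphic_maps_top_of_set_iff:
  "homeomorphic_maps (top_of_set A) (top_of_set B) f g \<longleftrightarrow> homeomorphism A B f g"
  unfolding homeomorphic_maps_def homeomorphism_def
  by (auto simp: continuous_map_subtopology_eu Pi_iff image_iff) (metis imageI)+

lemma homeomorphic_space_top_of_set_iff:
  "top_of_set A homeomorphic_space top_of_set B \<longleftrightarrow> A homeomorphic B"
  by (simp add: homeomorphic_space_def homeomorphic_def homeomorphic_maps_top_of_set_iff)

lemma locally_connected_space_top_of_set_iff:
  "locally_connected_space (top_of_set S) \<longleftrightarrow> locally connected S"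
  unfolding locally_connected locally_connected_space connectedin_subtopology connectedin_iff_connected
  by (meson openin_imp_subset order_trans)

lemma dendrite_set_if_homeomorphic:
  fixes S :: "'v::{real_normed_vector,complete_space} set"
  assumes "dendrite X" and hom: "X homeomorphic_space top_of_set S"
  shows "dendrite_set S"
proof
  have "compact_space (top_of_set S)" "connected_space (top_of_set S)"
    "locally_connected_space (top_of_set S)"
    using assms homeomorphic_compact_space homeomorphic_connected_space
      homeomorphic_locally_connected_space
    by (fastforce simp: dendrite_def continuum_def)+
  then show "compact S" "connected S" "locally connected S"
    using connectedin_iff_connected[of S]
    by (simp_all add: compact_space_def connectedin_def locally_connected_space_top_of_set_iff)
  show "circle_free S"
    unfolding circle_free_def
  proof (intro allI impI notI)
    fix T assume "T \<subseteq> S" "T homeomorphic sphere (0::complex) 1"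
    obtain f where f: "homeomorphic_map (top_of_set S) X f"
      using hom homeomorphic_space_sym homeomorphic_space by blast
    then have "subtopology (top_of_set S) T homeomorphic_space subtopology X (f ` T)"
      using \<open>T \<subseteq> S\<close> homeomorphic_map_subtopologies[OF f, of T "f ` T"]
        homeomorphic_imp_surjective_map[OF f]
      by (auto simp: homeomorphic_space inf_absorb2)
    also have "subtopology (top_of_set S) T = top_of_set T"
      using \<open>T \<subseteq> S\<close> by (simp add: subtopology_subtopology inf_absorb2)
    finally have "subtopology X (f ` T) homeomorphic_space top_of_set (sphere (0::complex) 1)"
      using \<open>T homeomorphic sphere 0 1\<close> homeomorphic_space_sym homeomorphic_space_trans
        homeomorphic_space_top_of_set_iff by metis
    moreover have "f ` T \<subseteq> topspace X"
      using \<open>T \<subseteq> S\<close> homeomorphic_imp_surjective_map[OF f] by auto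
    ultimately show False
      using \<open>dendrite X\<close> by (auto simp: dendrite_def simple_closed_curve_in_def)
  qed
qed

lemma connected_delete_image_end_point:
  assumes "homeomorphic_maps X (top_of_set S) \<phi> \<psi>" "end_point X e"
  shows "connected (S - {\<phi> e})"
proof -
  have \<phi>: "homeomorphic_map X (top_of_set S) \<phi>" using assms(1) homeomorphic_map_maps by blast
  have "\<phi> ` (topspace X - {e}) = S - {\<phi> e}"
    using homeomorphic_imp_surjective_map[OF \<phi>] homeomorphic_imp_injective_map[OF \<phi>] assms(2)
    by (auto simp: end_point_def inj_on_def)
  moreover have "connectedin (top_of_set S) (\<phi> ` (topspace X - {e}))"
    using assms(2) homeomorphic_imp_continuous_map[OF \<phi>]
    by (intro connectedin_continuous_map_image) (auto simp: end_point_def)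
  ultimately show ?thesis by (simp add: connectedin_subtopology)
qed

lemma homeomorphic_maps_conjugate:
  assumes "homeomorphic_maps X Y \<phi> \<psi>" "homeomorphic_maps X X h h'"
  shows "homeomorphic_maps Y Y (\<phi> \<circ> h \<circ> \<psi>) (\<phi> \<circ> h' \<circ> \<psi>)"
proof -
  have "homeomorphic_maps Y X \<psi> \<phi>" using assms(1) homeomorphic_maps_sym by blast
  then have "homeomorphic_maps Y X (h \<circ> \<psi>) (\<phi> \<circ> h')"
    using homeomorphic_maps_compose[of Y X \<psi> \<phi> X h h'] assms(2) by blast
  then have "homeomorphic_maps Y Y (\<phi> \<circ> (h \<circ> \<psi>)) ((\<phi> \<circ> h') \<circ> \<psi>)"
    using homeomorphic_maps_compose[of Y X "h \<circ> \<psi>" "\<phi> \<circ> h'" Y \<phi> \<psi>] assms(1) by blast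
  then show ?thesis by (simp add: comp_assoc)
qed

theorem lemma2p1:
  fixes X :: "'a topology" and h :: "'a \<Rightarrow> 'a" and e :: 'a
  assumes "dendrite X"
    and "\<exists>x y. x \<in> topspace X \<and> y \<in> topspace X \<and> x \<noteq> y"
    and "homeomorphic_map X X h"
    and "end_point X e"
    and "h e = e"
  shows "\<exists>p \<in> topspace X. p \<noteq> e \<and> h p = p"
proof -
  have "metrizable_space X" using assms(1) by (simp add: dendrite_def continuum_def)
  then obtain S :: "('a discrete \<Rightarrow>\<^sub>C real) set" and \<phi> \<psi> where \<phi>\<psi>: "homeomorphic_maps X (top_of_set S) \<phi> \<psi>"
    using metrizable_space_homeomorphic_subset_bcontfun by blast
  then interpret dendrite_set S
    using dendrite_set_if_homeomorphic[OF assms(1)] homeomorphic_space_def by blast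
  have \<psi>\<phi>: "\<And>u. u \<in> topspace X \<Longrightarrow> \<psi> (\<phi> u) = u" and \<phi>\<psi>': "\<And>p. p \<in> S \<Longrightarrow> \<phi> (\<psi> p) = p"
    and \<phi>X: "\<And>u. u \<in> topspace X \<Longrightarrow> \<phi> u \<in> S" and \<psi>S: "\<And>p. p \<in> S \<Longrightarrow> \<psi> p \<in> topspace X"
    using \<phi>\<psi> by (auto simp: homeomorphic_maps_def continuous_map_def)
  obtain h' where "homeomorphic_maps X X h h'" using assms(3) homeomorphic_map_maps by blast
  then have f: "homeomorphism S S (\<phi> \<circ> h \<circ> \<psi>) (\<phi> \<circ> h' \<circ> \<psi>)"
    using homeomorphic_maps_conjugate[OF \<phi>\<psi>] homeomorphic_maps_top_of_set_iff by blast
  have "e \<in> topspace X" using assms(4) by (simp add: end_point_def)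
  obtain x where "x \<in> topspace X" "x \<noteq> e" using assms(2) by blast
  then have "\<phi> x \<noteq> \<phi> e" using \<psi>\<phi> \<open>e \<in> topspace X\<close> by metis
  moreover have "\<phi> e \<in> S" "\<phi> x \<in> S" using \<phi>X \<open>e \<in> topspace X\<close> \<open>x \<in> topspace X\<close> by simp_all
  moreover have "(\<phi> \<circ> h \<circ> \<psi>) (\<phi> e) = \<phi> e" using \<psi>\<phi> \<open>e \<in> topspace X\<close> assms(5) by simp
  ultimately obtain p where "p \<in> S" "p \<noteq> \<phi> e" "\<phi> (h (\<psi> p)) = p"
    using homeomorphism_fixes_point_other_than_end_point[OF f _ _ _ \<open>\<phi> x \<in> S\<close>]
      connected_delete_image_end_point[OF \<phi>\<psi> assms(4)] by auto
  have "h (\<psi> p) \<in> topspace X"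
    using \<psi>S[OF \<open>p \<in> S\<close>] homeomorphic_imp_surjective_map[OF assms(3)] by blast
  then have "h (\<psi> p) = \<psi> p" using \<psi>\<phi> \<open>\<phi> (h (\<psi> p)) = p\<close> by metis
  moreover have "\<psi> p \<noteq> e" using \<phi>\<psi>' \<open>p \<in> S\<close> \<open>p \<noteq> \<phi> e\<close> by metis
  ultimately show ?thesis using \<psi>S[OF \<open>p \<in> S\<close>] by blast
qed

end
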